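(* For the branching-within-branching process described in the context and its associated branching process in random environment $(Z_n')_{n\ge0}$, for all $n,k,z\in\mathbb{N}_0$, $$\mathbb{P}_z(Z_n'=k)=\nu^{-n}\,\mathbb{E}_z\mathcal{T}_{n,k}\quad\text{and}\quad \mathbb{P}_z(Z_n'>0)=\nu^{-n}\,\mathbb{E}_z\mathcal{T}_n^*.$$
   Context: Branching-within-branching process (BwBP): Let $\mathbb{V}$ be the Ulam-Harris tree with root $\varnothing$. Let $(N_\mathsf{v})_{\mathsf{v}\in\mathbb{V}}$ be i.i.d. copies of an $\mathbb{N}_0$-valued random variable $N$ with law $(p_k)_{k\ge0}$ and finite mean $\nu=\mathbb{E}N$. The cell tree is the Galton-Watson tree $\mathbb{T}=\bigcup_n\mathbb{T}_n$, $\mathbb{T}_0=\{\varnothing\}$, $\mathbb{T}_n=\{\mathsf{v}_1\dots\mathsf{v}_n:\mathsf{v}_1\dots\mathsf{v}_{n-1}\in\mathbb{T}_{n-1},\ 1\le \mathsf{v}_n\le N_{\mathsf{v}_1\dots\mathsf{v}_{n-1}}\}$. For each $k\in\mathbb{N}$ let $X^{(\bullet,k)}=(X^{(1,k)},\dots,X^{(k,k)})$ be an $\mathbb{N}_0^k$-valued random vector and $X^{(\bullet,k)}_{i,\mathsf{v}}$, $i\in\mathbb{N},\mathsf{v}\in\mathbb{V}$, i.i.d. copies; these families for different $k$ are mutually independent and independent of $(N_\mathsf{v})$; $X^{(j,k)}_{i,\mathsf{v}}:=0$ for $j>k$. Parasite numbers: $Z_\varnothing$ given and $Z_{\mathsf{v}j}=\sum_{i=1}^{Z_\mathsf{v}}X^{(j,N_\mathsf{v})}_{i,\mathsf{v}}$.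 $\mathbb{P}_z$, $\mathbb{E}_z$ denote probability and expectation when the process starts with one cell containing $Z_\varnothing=z$ parasites. $\mathcal{T}_{n,k}$ is the number of cells $\mathsf{v}\in\mathbb{T}_n$ with $Z_\mathsf{v}=k$, and $\mathcal{T}_n^*=\#\{\mathsf{v}\in\mathbb{T}_n:Z_\mathsf{v}>0\}$ is the number of contaminated cells in generation $n$. Put $\mu_{j,k}=\mathbb{E}X^{(j,k)}$, $\gamma=\sum_{k\ge1}p_k\sum_{j=1}^k\mu_{j,k}$. Standing assumptions: $0<\gamma<\infty$; $p_1<1$ and the total number of parasites in generation 1 (starting from one cell with one parasite) is not a.s. equal to $1$; $p_k\,\mathbb{P}(X^{(j,k)}\ge2)>0$ for at least one pair $1\le j\le k$. Associated branching process in random environment (ABPRE): $(Z_n')_{n\ge0}$ is a Galton-Watson process in i.i.d. random environment $\Lambda=(\Lambda_n)_{n\ge0}$ with values in $\{\mathcal{L}(X^{(j,k)}):1\le j\le k<\infty\}$, $\mathbb{P}(\Lambda_0=\mathcal{L}(X^{(j,k)}))=p_k/\nu$, i.e. given $\Lambda$ all individuals of generation $n$ reproduce independently with law $\Lambda_n$; under $\mathbb{P}_z$ it starts with $Z_0'=z$. *)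

theory Defs
  imports "HOL-Probability.Probability"
begin

text \<open>Data: the cell offspring law p (law of N) and, for each k \<ge> 1, the joint law
  Xv k of the vector (X^(1,k),...,X^(k,k)), represented as a pmf on functions nat => nat
  of which only the components 1..k are used (X^(j,k) := 0 for j > k).\<close>

text \<open>Index set of the underlying independent random variables: N_v for each
  Ulam-Harris word v, and X^(.,k)_(i,v) for each word v, each k and each i.\<close>
datatype idx = NI "nat list" | XI "nat list" nat nat

definition coord_law :: "nat pmf \<Rightarrow> (nat \<Rightarrow> (nat \<Rightarrow> nat) pmf) \<Rightarrow> idx \<Rightarrow> (nat \<Rightarrow> nat) pmf" where
  "coord_law p Xv i = (case i of NI v \<Rightarrow> map_pmf (\<lambda>n _. n) p | XI v k j \<Rightarrow> Xv k)"

definition bwbp_space :: "nat pmf \<Rightarrow> (nat \<Rightarrow> (nat \<Rightarrow> nat) pmf) \<Rightarrow> (idx \<Rightarrow> nat \<Rightarrow> nat) measure" where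
  "bwbp_space p Xv = PiM UNIV (\<lambda>i. measure_pmf (coord_law p Xv i))"

definition Ncell :: "(idx \<Rightarrow> nat \<Rightarrow> nat) \<Rightarrow> nat list \<Rightarrow> nat" where
  "Ncell \<omega> v = \<omega> (NI v) 0"

definition Xcell :: "(idx \<Rightarrow> nat \<Rightarrow> nat) \<Rightarrow> nat list \<Rightarrow> nat \<Rightarrow> nat \<Rightarrow> nat \<Rightarrow> nat" where
  "Xcell \<omega> v k i j = \<omega> (XI v k i) j"

text \<open>Parasite numbers, computed on the reversed word (head = last letter):
  Z_root = z, Z_(vj) = sum_(i=1..Z_v) X^(j,N_v)_(i,v) (and 0 if j > N_v).\<close>
fun Zrev :: "(idx \<Rightarrow> nat \<Rightarrow> nat) \<Rightarrow> nat \<Rightarrow> nat list \<Rightarrow> nat" where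
  "Zrev \<omega> z [] = z"
| "Zrev \<omega> z (j # u) =
     (if j \<le> Ncell \<omega> (rev u)
      then (\<Sum>i\<in>{1..Zrev \<omega> z u}. Xcell \<omega> (rev u) (Ncell \<omega> (rev u)) i j)
      else 0)"

definition parasites :: "(idx \<Rightarrow> nat \<Rightarrow> nat) \<Rightarrow> nat \<Rightarrow> nat list \<Rightarrow> nat" where
  "parasites \<omega> z v = Zrev \<omega> z (rev v)"

definition cell_gen :: "(idx \<Rightarrow> nat \<Rightarrow> nat) \<Rightarrow> nat \<Rightarrow> nat list set" where
  "cell_gen \<omega> n = {v. length v = n \<and> (\<forall>m<n. 1 \<le> v ! m \<and> v ! m \<le> Ncell \<omega> (take m v))}"

definition Tnk :: "(idx \<Rightarrow> nat \<Rightarrow> nat) \<Rightarrow> nat \<Rightarrow> nat \<Rightarrow> nat \<Rightarrow> nat" where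
  "Tnk \<omega> z n k = card {v \<in> cell_gen \<omega> n. parasites \<omega> z v = k}"

definition Tstar :: "(idx \<Rightarrow> nat \<Rightarrow> nat) \<Rightarrow> nat \<Rightarrow> nat \<Rightarrow> nat" where
  "Tstar \<omega> z n = card {v \<in> cell_gen \<omega> n. parasites \<omega> z v > 0}"

definition nu :: "nat pmf \<Rightarrow> real" where
  "nu p = measure_pmf.expectation p real"

definition gamma_bwbp :: "nat pmf \<Rightarrow> (nat \<Rightarrow> (nat \<Rightarrow> nat) pmf) \<Rightarrow> ennreal" where
  "gamma_bwbp p Xv = (\<Sum>k. ennreal (pmf p k) * (\<Sum>j\<in>{1..k}. \<integral>\<^sup>+ x. of_nat (x j) \<partial>measure_pmf (Xv k)))"

definition gen1_total :: "nat pmf \<Rightarrow> (nat \<Rightarrow> (nat \<Rightarrow> nat) pmf) \<Rightarrow> nat pmf" where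
  "gen1_total p Xv = bind_pmf p (\<lambda>k. map_pmf (\<lambda>x. \<Sum>j\<in>{1..k}. x j) (Xv k))"

fun sum_iid :: "nat pmf \<Rightarrow> nat \<Rightarrow> nat pmf" where
  "sum_iid L 0 = return_pmf 0"
| "sum_iid L (Suc m) = bind_pmf L (\<lambda>a. map_pmf ((+) a) (sum_iid L m))"

fun gw_varenv :: "nat pmf list \<Rightarrow> nat \<Rightarrow> nat pmf" where
  "gw_varenv [] z = return_pmf z"
| "gw_varenv (L # Ls) z = bind_pmf (sum_iid L z) (gw_varenv Ls)"

fun env_seq :: "nat pmf pmf \<Rightarrow> nat \<Rightarrow> nat pmf list pmf" where
  "env_seq Env 0 = return_pmf []"
| "env_seq Env (Suc n) = bind_pmf Env (\<lambda>L. map_pmf (Cons L) (env_seq Env n))"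

definition env_law :: "(nat \<Rightarrow> (nat \<Rightarrow> nat) pmf) \<Rightarrow> (nat \<times> nat) pmf \<Rightarrow> nat pmf pmf" where
  "env_law Xv envp = map_pmf (\<lambda>(j,k). map_pmf (\<lambda>x. x j) (Xv k)) envp"

definition abpre :: "(nat \<Rightarrow> (nat \<Rightarrow> nat) pmf) \<Rightarrow> (nat \<times> nat) pmf \<Rightarrow> nat \<Rightarrow> nat \<Rightarrow> nat pmf" where
  "abpre Xv envp n z = bind_pmf (env_seq (env_law Xv envp) n) (\<lambda>Ls. gw_varenv Ls z)"

end

theory Submission
  imports Defs
begin

text \<open>By linearity, \<open>E\<^sub>z T(n, k)\<close> is the sum over words \<open>v\<close> of length \<open>n\<close> of the
  probability that \<open>v\<close> is a cell carrying \<open>k\<close> parasites. For \<open>v = u j\<close> the last step only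
  involves \<open>N\<^sub>u\<close> and the vectors \<open>X\<^sub>i\<^sub>,\<^sub>u\<close>, which are independent of the coordinates
  indexed by the proper prefixes of \<open>u\<close>; these alone decide whether \<open>u\<close> is a cell and how
  many parasites it carries. Hence
  \<open>P(u j cell, Z\<^sub>u\<^sub>j = k) = (\<Sum>m. P(u cell, Z\<^sub>u = m) R\<^sub>j(m, k))\<close>, where \<open>R\<^sub>j(m, k)\<close> is the
  probability that \<open>j \<le> N\<close> and that \<open>m\<close> independent copies of \<open>X\<^sup>(\<^sup>j\<^sup>,\<^sup>N\<^sup>)\<close> sum to \<open>k\<close>.
  Since the environment picks \<open>(j, N)\<close> with weight \<open>p\<^sub>N / \<nu>\<close>, summing over \<open>j\<close> gives
  \<open>\<nu> P\<^sub>m(Z'\<^sub>1 = k)\<close>, so induction on \<open>n\<close> yields \<open>E\<^sub>z T(n, k) = \<nu>\<^sup>n P\<^sub>z(Z'\<^sub>n = k)\<close>.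
  Summing over \<open>k > 0\<close> gives the statement for contaminated cells.\<close>

section \<open>Independent families of discrete coordinates\<close>

lemma prob_space_PiM_pmf: "prob_space (PiM I (\<lambda>i. measure_pmf (L i)))"
  by (rule prob_space_PiM) (simp add: prob_space_measure_pmf)

lemma space_PiM_pmf [simp]: "space (PiM UNIV (\<lambda>i. measure_pmf (L i))) = UNIV"
  by (auto simp: space_PiM PiE_def extensional_def)

lemma prod_emb_PiM_pmf:
  "prod_emb UNIV (\<lambda>i. measure_pmf (L i)) J (PiE J A) = {w. \<forall>j\<in>J. w j \<in> A j}"
  by (auto simp: prod_emb_def PiE_iff)

lemma measurable_override_on_PiM_pmf:
  "(\<lambda>(w, w'). override_on w w' B)
     \<in> PiM UNIV (\<lambda>i. measure_pmf (L i)) \<Otimes>\<^sub>M PiM UNIV (\<lambda>i. measure_pmf (L i))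
       \<rightarrow>\<^sub>M PiM UNIV (\<lambda>i. measure_pmf (L i))"
  unfolding override_on_def split_beta'
proof (rule measurable_PiM_single')
  fix i show "(\<lambda>x. if i \<in> B then snd x i else fst x i)
      \<in> PiM UNIV (\<lambda>i. measure_pmf (L i)) \<Otimes>\<^sub>M PiM UNIV (\<lambda>i. measure_pmf (L i)) \<rightarrow>\<^sub>M measure_pmf (L i)"
    by (cases "i \<in> B") simp_all
qed simp

lemma distr_override_on_PiM_pmf:
  fixes L :: "'a \<Rightarrow> 'b pmf"
  defines "P \<equiv> PiM UNIV (\<lambda>i. measure_pmf (L i))"
  shows "distr (P \<Otimes>\<^sub>M P) P (\<lambda>(w, w'). override_on w w' B) = P"
proof (rule measure_eqI_PiM_infinite[where I=UNIV and M="\<lambda>i. measure_pmf (L i)"])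
  interpret prob_space P unfolding P_def by (rule prob_space_PiM_pmf)
  interpret pp: pair_prob_space P P ..
  let ?f = "\<lambda>(w, w'). override_on w w' B"
  have f: "?f \<in> P \<Otimes>\<^sub>M P \<rightarrow>\<^sub>M P"
    unfolding P_def by (rule measurable_override_on_PiM_pmf)
  show "sets (distr (P \<Otimes>\<^sub>M P) P ?f) = sets (PiM UNIV (\<lambda>i. measure_pmf (L i)))"
    "sets P = sets (PiM UNIV (\<lambda>i. measure_pmf (L i)))"
    by (simp_all add: P_def)
  show "finite_measure (distr (P \<Otimes>\<^sub>M P) P ?f)"
    using prob_space.prob_space_distr[OF pp.P.prob_space_axioms f]
    by (simp add: prob_space.axioms(1))
  fix A J assume J: "finite J" "J \<subseteq> (UNIV :: 'a set)"
  have cyl: "emeasure P {w. \<forall>j\<in>J'. w j \<in> A j} = (\<Prod>j\<in>J'. emeasure (measure_pmf (L j)) (A j))"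
    if "finite J'" for J'
    unfolding P_def prod_emb_PiM_pmf[of L, symmetric]
    using that by (intro emeasure_PiM_emb) (auto simp: prob_space_measure_pmf)
  have cyl_sets: "{w. \<forall>j\<in>J'. w j \<in> A j} \<in> sets P" if "finite J'" for J'
    unfolding P_def prod_emb_PiM_pmf[of L, symmetric] using that by (intro sets_PiM_I) auto
  have "?f -` {w. \<forall>j\<in>J. w j \<in> A j} \<inter> space (P \<Otimes>\<^sub>M P)
      = {w. \<forall>j\<in>J-B. w j \<in> A j} \<times> {w. \<forall>j\<in>J \<inter> B. w j \<in> A j}"
    by (auto simp: space_pair_measure P_def override_on_def)
  then have "emeasure (distr (P \<Otimes>\<^sub>M P) P ?f) {w. \<forall>j\<in>J. w j \<in> A j}
      = emeasure (P \<Otimes>\<^sub>M P) ({w. \<forall>j\<in>J-B. w j \<in> A j} \<times> {w. \<forall>j\<in>J \<inter> B. w j \<in> A j})"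
    using J by (simp add: emeasure_distr[OF f cyl_sets])
  also have "\<dots> = (\<Prod>j\<in>J-B. emeasure (measure_pmf (L j)) (A j)) * (\<Prod>j\<in>J\<inter>B. emeasure (measure_pmf (L j)) (A j))"
    using J by (simp add: emeasure_pair_measure_Times cyl_sets cyl)
  also have "\<dots> = (\<Prod>j\<in>J. emeasure (measure_pmf (L j)) (A j))"
    using J by (subst prod.union_disjoint[symmetric]) (auto intro!: prod.cong)
  finally show "emeasure (distr (P \<Otimes>\<^sub>M P) P ?f) (prod_emb UNIV (\<lambda>i. measure_pmf (L i)) J (Pi\<^sub>E J A))
      = emeasure P (prod_emb UNIV (\<lambda>i. measure_pmf (L i)) J (Pi\<^sub>E J A))"
    by (simp add: prod_emb_PiM_pmf cyl J)
qed

lemma nn_integral_PiM_pmf_override_on: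
  fixes L :: "'a \<Rightarrow> 'b pmf"
  defines "P \<equiv> PiM UNIV (\<lambda>i. measure_pmf (L i))"
  assumes G: "G \<in> borel_measurable P"
  shows "(\<integral>\<^sup>+w. G w \<partial>P) = (\<integral>\<^sup>+w'. \<integral>\<^sup>+w. G (override_on w w' B) \<partial>P \<partial>P)"
proof -
  interpret prob_space P unfolding P_def by (rule prob_space_PiM_pmf)
  interpret pp: pair_prob_space P P ..
  have f: "(\<lambda>(w, w'). override_on w w' B) \<in> P \<Otimes>\<^sub>M P \<rightarrow>\<^sub>M P"
    unfolding P_def by (rule measurable_override_on_PiM_pmf)
  have "(\<integral>\<^sup>+w. G w \<partial>P) = (\<integral>\<^sup>+w. G w \<partial>distr (P \<Otimes>\<^sub>M P) P (\<lambda>(w, w'). override_on w w' B))"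
    by (simp add: distr_override_on_PiM_pmf P_def)
  also have "\<dots> = (\<integral>\<^sup>+x. G (override_on (fst x) (snd x) B) \<partial>(P \<Otimes>\<^sub>M P))"
    by (subst nn_integral_distr[OF f]) (simp_all add: G split_beta')
  also have "\<dots> = (\<integral>\<^sup>+w'. \<integral>\<^sup>+w. G (override_on w w' B) \<partial>P \<partial>P)"
    using measurable_compose[OF f G]
    by (subst pp.nn_integral_snd[symmetric]) (auto simp: split_beta')
  finally show ?thesis .
qed

lemma nn_integral_PiM_pmf_component:
  "(\<integral>\<^sup>+w. f (w i) \<partial>PiM UNIV (\<lambda>i. measure_pmf (L i))) = (\<integral>\<^sup>+x. f x \<partial>measure_pmf (L i))"
proof -
  have "(\<integral>\<^sup>+x. f x \<partial>measure_pmf (L i))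
      = (\<integral>\<^sup>+x. f x \<partial>distr (PiM UNIV (\<lambda>i. measure_pmf (L i))) (measure_pmf (L i)) (\<lambda>w. w i))"
    by (subst distr_PiM_component) (auto simp: prob_space_measure_pmf)
  also have "\<dots> = (\<integral>\<^sup>+w. f (w i) \<partial>PiM UNIV (\<lambda>i. measure_pmf (L i)))"
    by (rule nn_integral_distr) auto
  finally show ?thesis ..
qed

lemma measurable_PiM_pmf_component_app:
  "(\<lambda>w. w i j) \<in> PiM UNIV (\<lambda>i. measure_pmf (L i)) \<rightarrow>\<^sub>M count_space UNIV"
proof -
  have "(\<lambda>w. w i) \<in> PiM UNIV (\<lambda>i. measure_pmf (L i)) \<rightarrow>\<^sub>M count_space UNIV"
    using measurable_component_singleton[of i UNIV "\<lambda>i. measure_pmf (L i)"] by simp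
  then show ?thesis by (rule measurable_compose) simp
qed

lemma suminf_of_bool_eq_times: "(\<Sum>m. of_bool (x = m) * (f m :: ennreal)) = f x"
proof -
  have "(\<lambda>m. of_bool (x = m) * f m) = (\<lambda>m. if m = x then f m else 0)" by auto
  with sums_single[of x f] show ?thesis by (simp add: sums_iff)
qed

lemma nn_integral_of_bool_times_fun_nat:
  fixes f :: "'a \<Rightarrow> nat" and c :: "nat \<Rightarrow> ennreal"
  assumes [measurable]: "f \<in> M \<rightarrow>\<^sub>M count_space UNIV" "Measurable.pred M P"
  shows "(\<integral>\<^sup>+x. of_bool (P x) * c (f x) \<partial>M) = (\<Sum>m. (\<integral>\<^sup>+x. of_bool (P x \<and> f x = m) \<partial>M) * c m)"
proof -
  have "(\<integral>\<^sup>+x. of_bool (P x) * c (f x) \<partial>M) = (\<integral>\<^sup>+x. (\<Sum>m. of_bool (P x \<and> f x = m) * c m) \<partial>M)"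
  proof (intro nn_integral_cong)
    fix x
    have "(\<Sum>m. of_bool (P x \<and> f x = m) * c m) = (\<Sum>m. of_bool (f x = m) * (of_bool (P x) * c m))"
      by (intro suminf_cong) auto
    then show "of_bool (P x) * c (f x) = (\<Sum>m. of_bool (P x \<and> f x = m) * c m)"
      by (simp add: suminf_of_bool_eq_times)
  qed
  also have "\<dots> = (\<Sum>m. \<integral>\<^sup>+x. of_bool (P x \<and> f x = m) * c m \<partial>M)"
    by (rule nn_integral_suminf) measurable
  also have "\<dots> = (\<Sum>m. (\<integral>\<^sup>+x. of_bool (P x \<and> f x = m) \<partial>M) * c m)"
    by (simp add: nn_integral_multc)
  finally show ?thesis .
qed

lemma prob_space_bwbp_space: "prob_space (bwbp_space p Xv)"
  unfolding bwbp_space_def by (rule prob_space_PiM_pmf)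

lemma nn_integral_bwbp_space_override_on:
  "G \<in> borel_measurable (bwbp_space p Xv) \<Longrightarrow>
    (\<integral>\<^sup>+w. G w \<partial>bwbp_space p Xv)
      = (\<integral>\<^sup>+w'. \<integral>\<^sup>+w. G (override_on w w' B) \<partial>bwbp_space p Xv \<partial>bwbp_space p Xv)"
  unfolding bwbp_space_def by (rule nn_integral_PiM_pmf_override_on)

lemma nn_integral_bwbp_space_coordinate:
  "(\<integral>\<^sup>+w. f (w i) \<partial>bwbp_space p Xv) = (\<integral>\<^sup>+x. f x \<partial>measure_pmf (coord_law p Xv i))"
  unfolding bwbp_space_def by (rule nn_integral_PiM_pmf_component)

lemma measurable_Ncell [measurable]:
  "(\<lambda>w. Ncell w v) \<in> bwbp_space p Xv \<rightarrow>\<^sub>M count_space UNIV"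
  unfolding Ncell_def bwbp_space_def by (rule measurable_PiM_pmf_component_app)

lemma measurable_Xcell [measurable]:
  "(\<lambda>w. Xcell w v K i j) \<in> bwbp_space p Xv \<rightarrow>\<^sub>M count_space UNIV"
  unfolding Xcell_def bwbp_space_def by (rule measurable_PiM_pmf_component_app)

fun idx_word :: "idx \<Rightarrow> nat list" where
  "idx_word (NI v) = v"
| "idx_word (XI v k i) = v"

definition is_cell :: "(idx \<Rightarrow> nat \<Rightarrow> nat) \<Rightarrow> nat list \<Rightarrow> bool" where
  "is_cell w v \<longleftrightarrow> (\<forall>m<length v. 1 \<le> v ! m \<and> v ! m \<le> Ncell w (take m v))"

lemma cell_gen_iff: "v \<in> cell_gen w n \<longleftrightarrow> length v = n \<and> is_cell w v"
  by (auto simp: cell_gen_def is_cell_def)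

lemma is_cell_Nil [simp]: "is_cell w []"
  by (simp add: is_cell_def)

lemma is_cell_snoc: "is_cell w (v @ [j]) \<longleftrightarrow> is_cell w v \<and> 1 \<le> j \<and> j \<le> Ncell w v"
  by (auto simp: is_cell_def nth_append less_Suc_eq)

lemma parasites_Nil [simp]: "parasites w z [] = z"
  by (simp add: parasites_def)

lemma parasites_snoc:
  "parasites w z (v @ [j])
     = (if j \<le> Ncell w v then \<Sum>i\<in>{1..parasites w z v}. Xcell w v (Ncell w v) i j else 0)"
  by (simp add: parasites_def)

lemma measurable_is_cell [measurable]: "Measurable.pred (bwbp_space p Xv) (\<lambda>w. is_cell w v)"
  unfolding is_cell_def by measurable

lemma measurable_parasites [measurable]:
  "(\<lambda>w. parasites w z v) \<in> bwbp_space p Xv \<rightarrow>\<^sub>M count_space UNIV"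
proof (induction v rule: rev_induct)
  case (snoc j u)
  note snoc.IH [measurable]
  show ?case unfolding parasites_snoc by measurable
qed simp

lemma is_cell_parasites_cong:
  assumes "\<And>m i. m < length v \<Longrightarrow> idx_word i = take m v \<Longrightarrow> w i = w' i"
  shows "is_cell w v = is_cell w' v \<and> parasites w z v = parasites w' z v"
  using assms
proof (induction v rule: rev_induct)
  case (snoc j u)
  have "w i = w' i" if "idx_word i = u" for i
    using snoc.prems[of "length u" i] that by simp
  then have "Ncell w u = Ncell w' u" "Xcell w u = Xcell w' u"
    by (auto simp: Ncell_def Xcell_def fun_eq_iff)
  moreover have "is_cell w u = is_cell w' u \<and> parasites w z u = parasites w' z u"
  proof (rule snoc.IH)
    fix m i assume "m < length u" "idx_word i = take m u"
    then show "w i = w' i" using snoc.prems[of m i] by simp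
  qed
  ultimately show ?case by (simp add: is_cell_snoc parasites_snoc)
qed simp

lemma cell_gen_Suc_subset:
  "cell_gen w (Suc n) \<subseteq> (\<Union>v\<in>cell_gen w n. (\<lambda>j. v @ [j]) ` {..Ncell w v})"
proof
  fix u assume "u \<in> cell_gen w (Suc n)"
  then obtain v j where "u = v @ [j]" "length v = n" "is_cell w (v @ [j])"
    by (cases u rule: rev_cases) (auto simp: cell_gen_iff)
  then show "u \<in> (\<Union>v\<in>cell_gen w n. (\<lambda>j. v @ [j]) ` {..Ncell w v})"
    by (auto simp: cell_gen_iff is_cell_snoc)
qed

lemma finite_cell_gen: "finite (cell_gen w n)"
proof (induction n)
  case 0
  have "cell_gen w 0 = {[]}" by (auto simp: cell_gen_def)
  then show ?case by simp
next
  case (Suc n)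
  then show ?case using finite_subset[OF cell_gen_Suc_subset] by blast
qed

section \<open>The one-generation step along a word\<close>

lemma nn_integral_sum_Xcell:
  fixes f :: "nat \<Rightarrow> ennreal"
  shows "(\<integral>\<^sup>+w. f (\<Sum>i\<in>{1..m}. Xcell w v K i j) \<partial>bwbp_space p Xv)
    = (\<integral>\<^sup>+s. f s \<partial>measure_pmf (sum_iid (map_pmf (\<lambda>x. x j) (Xv K)) m))"
proof (induction m arbitrary: f)
  case 0
  interpret prob_space "bwbp_space p Xv" by (rule prob_space_bwbp_space)
  show ?case using emeasure_space_1 by simp
next
  case (Suc m)
  let ?c = "XI v K (Suc m)" and ?S = "\<lambda>w. \<Sum>i\<in>{1..m}. Xcell w v K i j"
  have S: "(\<Sum>i\<in>{1..Suc m}. Xcell w v K i j) = Xcell w v K (Suc m) j + ?S w" for w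
    by simp
  have "?S (override_on w w' {?c}) = ?S w" "Xcell (override_on w w' {?c}) v K (Suc m) j = w' ?c j"
    for w w'
    by (auto simp: Xcell_def intro!: sum.cong)
  then have "(\<integral>\<^sup>+w. f (\<Sum>i\<in>{1..Suc m}. Xcell w v K i j) \<partial>bwbp_space p Xv)
      = (\<integral>\<^sup>+w'. \<integral>\<^sup>+w. f (w' ?c j + ?S w) \<partial>bwbp_space p Xv \<partial>bwbp_space p Xv)"
    unfolding S by (subst nn_integral_bwbp_space_override_on[where B = "{?c}"]) simp_all
  also have "\<dots> = (\<integral>\<^sup>+w'. \<integral>\<^sup>+s. f (w' ?c j + s) \<partial>sum_iid (map_pmf (\<lambda>x. x j) (Xv K)) m \<partial>bwbp_space p Xv)"
    by (intro nn_integral_cong Suc.IH)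
  also have "\<dots> = (\<integral>\<^sup>+x. \<integral>\<^sup>+s. f (x j + s) \<partial>sum_iid (map_pmf (\<lambda>x. x j) (Xv K)) m \<partial>coord_law p Xv ?c)"
    by (rule nn_integral_bwbp_space_coordinate)
  also have "\<dots> = (\<integral>\<^sup>+s. f s \<partial>sum_iid (map_pmf (\<lambda>x. x j) (Xv K)) (Suc m))"
    by (simp add: coord_law_def)
  finally show ?case .
qed

definition child_kernel :: "nat pmf \<Rightarrow> (nat \<Rightarrow> (nat \<Rightarrow> nat) pmf) \<Rightarrow> nat \<Rightarrow> nat \<Rightarrow> nat \<Rightarrow> ennreal" where
  "child_kernel p Xv m j k =
    (\<integral>\<^sup>+K. of_bool (1 \<le> j \<and> j \<le> K) * ennreal (pmf (sum_iid (map_pmf (\<lambda>x. x j) (Xv K)) m) k) \<partial>p)"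

lemma nn_integral_child_parasites:
  "(\<integral>\<^sup>+w. of_bool (1 \<le> j \<and> j \<le> Ncell w v \<and> (\<Sum>i\<in>{1..m}. Xcell w v (Ncell w v) i j) = k)
      \<partial>bwbp_space p Xv)
    = child_kernel p Xv m j k"
proof -
  let ?c = "NI v"
  have "Ncell (override_on w w' {?c}) v = Ncell w' v" "Xcell (override_on w w' {?c}) v = Xcell w v"
    for w w'
    by (simp_all add: Ncell_def Xcell_def fun_eq_iff)
  then have "(\<integral>\<^sup>+w. of_bool (1 \<le> j \<and> j \<le> Ncell w v \<and> (\<Sum>i\<in>{1..m}. Xcell w v (Ncell w v) i j) = k)
      \<partial>bwbp_space p Xv)
    = (\<integral>\<^sup>+w'. \<integral>\<^sup>+w. of_bool (1 \<le> j \<and> j \<le> Ncell w' v) *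
        indicator {k} (\<Sum>i\<in>{1..m}. Xcell w v (Ncell w' v) i j) \<partial>bwbp_space p Xv \<partial>bwbp_space p Xv)"
    by (subst nn_integral_bwbp_space_override_on[where B = "{?c}"])
      (auto simp: indicator_def intro!: nn_integral_cong)
  also have "\<dots> = (\<integral>\<^sup>+w'. of_bool (1 \<le> j \<and> j \<le> Ncell w' v) *
      ennreal (pmf (sum_iid (map_pmf (\<lambda>x. x j) (Xv (Ncell w' v))) m) k) \<partial>bwbp_space p Xv)"
  proof (rule nn_integral_cong)
    fix w'
    let ?b = "of_bool (1 \<le> j \<and> j \<le> Ncell w' v) :: ennreal"
    show "(\<integral>\<^sup>+w. ?b * indicator {k} (\<Sum>i\<in>{1..m}. Xcell w v (Ncell w' v) i j) \<partial>bwbp_space p Xv)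
        = ?b * ennreal (pmf (sum_iid (map_pmf (\<lambda>x. x j) (Xv (Ncell w' v))) m) k)"
      by (subst nn_integral_sum_Xcell[where f = "\<lambda>s. ?b * indicator {k} s"])
        (simp add: emeasure_pmf_single)
  qed
  also have "\<dots> = child_kernel p Xv m j k"
    unfolding Ncell_def child_kernel_def
    by (subst nn_integral_bwbp_space_coordinate) (simp add: coord_law_def)
  finally show ?thesis .
qed

definition cell_prob :: "nat pmf \<Rightarrow> (nat \<Rightarrow> (nat \<Rightarrow> nat) pmf) \<Rightarrow> nat \<Rightarrow> nat list \<Rightarrow> nat \<Rightarrow> ennreal" where
  "cell_prob p Xv z v k = (\<integral>\<^sup>+w. of_bool (is_cell w v \<and> parasites w z v = k) \<partial>bwbp_space p Xv)"

lemma cell_prob_Nil: "cell_prob p Xv z [] k = of_bool (z = k)"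
proof -
  interpret prob_space "bwbp_space p Xv" by (rule prob_space_bwbp_space)
  show ?thesis using emeasure_space_1 by (simp add: cell_prob_def)
qed

lemma cell_prob_snoc: "cell_prob p Xv z (v @ [j]) k = (\<Sum>m. cell_prob p Xv z v m * child_kernel p Xv m j k)"
proof -
  define B where "B = {i. idx_word i = v}"
  define child :: "nat \<Rightarrow> (idx \<Rightarrow> nat \<Rightarrow> nat) \<Rightarrow> ennreal" where
    "child m w = of_bool (1 \<le> j \<and> j \<le> Ncell w v \<and> (\<Sum>i\<in>{1..m}. Xcell w v (Ncell w v) i j) = k)"
    for m w
  have [measurable]: "child m \<in> borel_measurable (bwbp_space p Xv)" for m
    unfolding child_def by measurable
  have split: "of_bool (is_cell w (v @ [j]) \<and> parasites w z (v @ [j]) = k)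
      = of_bool (is_cell w v) * child (parasites w z v) w" for w
    by (auto simp: child_def is_cell_snoc parasites_snoc)
  have prefix: "is_cell (override_on w w' B) v = is_cell w v
      \<and> parasites (override_on w w' B) z v = parasites w z v" for w w'
    by (rule is_cell_parasites_cong) (auto simp: B_def dest: arg_cong[of _ _ length])
  have child_override: "child m (override_on w w' B) = child m w'" for m w w'
    by (simp add: child_def B_def Ncell_def Xcell_def)
  have "cell_prob p Xv z (v @ [j]) k
      = (\<integral>\<^sup>+w'. \<integral>\<^sup>+w. of_bool (is_cell w v) * child (parasites w z v) w'
          \<partial>bwbp_space p Xv \<partial>bwbp_space p Xv)"
    unfolding cell_prob_def
    by (subst nn_integral_bwbp_space_override_on[where B = B]) (simp_all add: split prefix child_override)
  also have "\<dots> = (\<integral>\<^sup>+w'. (\<Sum>m. cell_prob p Xv z v m * child m w') \<partial>bwbp_space p Xv)"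
    unfolding cell_prob_def
    by (intro nn_integral_cong nn_integral_of_bool_times_fun_nat) measurable
  also have "\<dots> = (\<Sum>m. cell_prob p Xv z v m * child_kernel p Xv m j k)"
    by (simp add: nn_integral_suminf nn_integral_cmult child_def nn_integral_child_parasites[simplified])
  finally show ?thesis .
qed

definition mean_cells :: "nat pmf \<Rightarrow> (nat \<Rightarrow> (nat \<Rightarrow> nat) pmf) \<Rightarrow> nat \<Rightarrow> nat \<Rightarrow> nat \<Rightarrow> ennreal" where
  "mean_cells p Xv z n k = (\<integral>\<^sup>+v. of_bool (length v = n) * cell_prob p Xv z v k \<partial>count_space UNIV)"

lemma nn_integral_count_space_snoc:
  fixes f :: "'a list \<Rightarrow> ennreal"
  assumes "f [] = 0"
  shows "(\<integral>\<^sup>+v. f v \<partial>count_space UNIV)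
    = (\<integral>\<^sup>+v. \<integral>\<^sup>+j. f (v @ [j]) \<partial>count_space UNIV \<partial>count_space UNIV)"
proof -
  have bij: "bij_betw (\<lambda>(v, j). v @ [j]) UNIV {v :: 'a list. v \<noteq> []}"
    by (rule bij_betwI[where g = "\<lambda>v. (butlast v, last v)"]) auto
  have "(\<integral>\<^sup>+v. f v \<partial>count_space UNIV) = (\<integral>\<^sup>+v. f v \<partial>count_space {v. v \<noteq> []})"
    by (subst nn_integral_count_space_indicator)
      (auto intro!: nn_integral_cong simp: indicator_def assms)
  also have "\<dots> = (\<integral>\<^sup>+x. f (case x of (v, j) \<Rightarrow> v @ [j]) \<partial>count_space UNIV)"
    by (rule nn_integral_bij_count_space[OF bij, symmetric])
  also have "\<dots> = (\<integral>\<^sup>+v. \<integral>\<^sup>+j. f (v @ [j]) \<partial>count_space UNIV \<partial>count_space UNIV)"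
    by (subst nn_integral_fst_count_space[symmetric]) (simp add: split_beta')
  finally show ?thesis .
qed

lemma mean_cells_0: "mean_cells p Xv z 0 k = of_bool (z = k)"
  unfolding mean_cells_def
  by (subst nn_integral_count_space'[where A = "{[]}"]) (auto simp: cell_prob_Nil)

lemma mean_cells_Suc:
  "mean_cells p Xv z (Suc n) k
    = (\<Sum>m. mean_cells p Xv z n m * (\<integral>\<^sup>+j. child_kernel p Xv m j k \<partial>count_space UNIV))"
proof -
  let ?Q = "\<lambda>m. \<integral>\<^sup>+j. child_kernel p Xv m j k \<partial>count_space UNIV"
  have "mean_cells p Xv z (Suc n) k = (\<integral>\<^sup>+v. \<integral>\<^sup>+j.
      of_bool (length (v @ [j]) = Suc n) * cell_prob p Xv z (v @ [j]) k
      \<partial>count_space UNIV \<partial>count_space UNIV)"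
    unfolding mean_cells_def by (rule nn_integral_count_space_snoc) simp
  also have "\<dots> = (\<integral>\<^sup>+v. (\<Sum>m. of_bool (length v = n) * cell_prob p Xv z v m * ?Q m)
      \<partial>count_space UNIV)"
  proof (rule nn_integral_cong)
    fix v
    have "(\<integral>\<^sup>+j. of_bool (length (v @ [j]) = Suc n) * cell_prob p Xv z (v @ [j]) k \<partial>count_space UNIV)
        = (\<integral>\<^sup>+j. (\<Sum>m. of_bool (length v = n) * cell_prob p Xv z v m * child_kernel p Xv m j k)
            \<partial>count_space UNIV)"
      by (simp only: cell_prob_snoc length_append_singleton nat.inject
          ennreal_suminf_cmult[symmetric] mult.assoc)
    also have "\<dots> = (\<Sum>m. of_bool (length v = n) * cell_prob p Xv z v m * ?Q m)"
      by (simp only: nn_integral_suminf[OF borel_measurable_count_space]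
          nn_integral_cmult[OF borel_measurable_count_space])
    finally show "(\<integral>\<^sup>+j. of_bool (length (v @ [j]) = Suc n) * cell_prob p Xv z (v @ [j]) k
        \<partial>count_space UNIV) = (\<Sum>m. of_bool (length v = n) * cell_prob p Xv z v m * ?Q m)" .
  qed
  also have "\<dots> = (\<Sum>m. mean_cells p Xv z n m * ?Q m)"
    by (simp only: nn_integral_suminf[OF borel_measurable_count_space]
        nn_integral_multc[OF borel_measurable_count_space] mean_cells_def)
  finally show ?thesis .
qed

lemma env_seq_Suc_snoc:
  "env_seq Env (Suc n) = bind_pmf (env_seq Env n) (\<lambda>Ls. map_pmf (\<lambda>L. Ls @ [L]) Env)"
proof (induction n)
  case 0
  then show ?case by (simp add: map_pmf_def bind_return_pmf bind_return_pmf')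
next
  case (Suc n)
  show ?case
    by (subst env_seq.simps(2), subst Suc) (simp add: map_pmf_def bind_assoc_pmf bind_return_pmf)
qed

lemma gw_varenv_Nil_eq_return_pmf: "gw_varenv [] = return_pmf"
  by (rule ext) simp

lemma gw_varenv_snoc: "gw_varenv (Ls @ [L]) z = bind_pmf (gw_varenv Ls z) (sum_iid L)"
proof (induction Ls arbitrary: z)
  case Nil
  then show ?case by (simp add: gw_varenv_Nil_eq_return_pmf bind_return_pmf bind_return_pmf')
next
  case (Cons a Ls)
  then have "gw_varenv (Ls @ [L]) = (\<lambda>x. bind_pmf (gw_varenv Ls x) (sum_iid L))"
    by auto
  then show ?case by (simp add: bind_assoc_pmf)
qed

lemma abpre_0: "abpre Xv envp 0 z = return_pmf z"
  by (simp add: abpre_def bind_return_pmf)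

lemma abpre_1: "abpre Xv envp 1 m = bind_pmf (env_law Xv envp) (\<lambda>L. sum_iid L m)"
  by (simp add: abpre_def map_pmf_def bind_assoc_pmf bind_return_pmf gw_varenv_Nil_eq_return_pmf bind_return_pmf')

lemma abpre_Suc: "abpre Xv envp (Suc n) z = bind_pmf (abpre Xv envp n z) (abpre Xv envp 1)"
proof -
  have "abpre Xv envp (Suc n) z
      = bind_pmf (abpre Xv envp n z) (\<lambda>m. bind_pmf (env_law Xv envp) (\<lambda>L. sum_iid L m))"
    unfolding abpre_def env_seq_Suc_snoc
    by (simp add: bind_assoc_pmf bind_map_pmf gw_varenv_snoc bind_commute_pmf[of "env_law Xv envp"])
  also have "(\<lambda>m. bind_pmf (env_law Xv envp) (\<lambda>L. sum_iid L m)) = abpre Xv envp 1"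
    by (rule ext) (rule abpre_1[symmetric])
  finally show ?thesis .
qed

section \<open>The many-to-one formula\<close>

text \<open>Were \<open>\<nu> = 0\<close>, the hypothesis would make \<open>envp\<close> vanish everywhere, as \<open>x / 0 = 0\<close>.\<close>
lemma nu_pos:
  assumes envp: "\<And>j k. pmf envp (j, k) = (if 1 \<le> j \<and> j \<le> k then pmf p k / nu p else 0)"
  shows "nu p > 0"
proof -
  obtain x where "x \<in> set_pmf envp" using set_pmf_not_empty by fastforce
  then have "pmf envp x > 0" by (simp add: pmf_positive)
  then obtain K where "pmf p K / nu p > 0" using envp by (cases x) (auto split: if_splits)
  moreover have "nu p \<ge> 0" unfolding nu_def by (rule integral_nonneg_AE) auto
  ultimately show ?thesis by (simp add: zero_less_divide_iff)
qed

lemma ennreal_pmf_abpre_1: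
  "ennreal (pmf (abpre Xv envp 1 m) k)
    = (\<integral>\<^sup>+x. ennreal (pmf envp x) * ennreal (pmf (sum_iid (map_pmf (\<lambda>y. y (fst x)) (Xv (snd x))) m) k)
        \<partial>count_space UNIV)"
  unfolding abpre_1 ennreal_pmf_bind env_law_def nn_integral_map_pmf
  by (simp add: nn_integral_measure_pmf split_beta')

lemma nn_integral_child_kernel:
  assumes envp: "\<And>j k. pmf envp (j, k) = (if 1 \<le> j \<and> j \<le> k then pmf p k / nu p else 0)"
  shows "(\<integral>\<^sup>+j. child_kernel p Xv m j k \<partial>count_space UNIV)
    = ennreal (nu p) * ennreal (pmf (abpre Xv envp 1 m) k)"
proof -
  have nu: "nu p > 0" by (rule nu_pos[OF envp])
  let ?f = "\<lambda>j K. ennreal (pmf (sum_iid (map_pmf (\<lambda>x. x j) (Xv K)) m) k)"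
  have weight: "ennreal (nu p) * (ennreal (pmf envp (j, K)) * ?f j K)
      = ennreal (pmf p K) * (of_bool (1 \<le> j \<and> j \<le> K) * ?f j K)" for j K
    using nu by (simp add: envp ennreal_mult'[symmetric] mult.assoc[symmetric])
  have "ennreal (nu p) * ennreal (pmf (abpre Xv envp 1 m) k)
      = (\<integral>\<^sup>+j. \<integral>\<^sup>+K. ennreal (nu p) * (ennreal (pmf envp (j, K)) * ?f j K)
          \<partial>count_space UNIV \<partial>count_space UNIV)"
    unfolding ennreal_pmf_abpre_1
    by (subst nn_integral_fst_count_space[symmetric]) (simp add: nn_integral_cmult)
  also have "\<dots> = (\<integral>\<^sup>+j. child_kernel p Xv m j k \<partial>count_space UNIV)"
    unfolding weight child_kernel_def by (simp add: nn_integral_measure_pmf)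
  finally show ?thesis ..
qed

lemma ennreal_pmf_abpre_Suc:
  "ennreal (pmf (abpre Xv envp (Suc n) z) k)
    = (\<Sum>m. ennreal (pmf (abpre Xv envp n z) m) * ennreal (pmf (abpre Xv envp 1 m) k))"
  by (simp only: abpre_Suc[of Xv envp n z] ennreal_pmf_bind)
    (simp add: nn_integral_measure_pmf nn_integral_count_space_nat)

lemma mean_cells_eq_abpre:
  assumes envp: "\<And>j k. pmf envp (j, k) = (if 1 \<le> j \<and> j \<le> k then pmf p k / nu p else 0)"
  shows "mean_cells p Xv z n k = ennreal (nu p ^ n) * ennreal (pmf (abpre Xv envp n z) k)"
proof (induction n arbitrary: k)
  case 0
  then show ?case by (simp add: mean_cells_0 abpre_0 indicator_def)
next
  case (Suc n)
  have nu: "nu p > 0" by (rule nu_pos[OF envp])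
  have "mean_cells p Xv z (Suc n) k = (\<Sum>m. (ennreal (nu p ^ n) * ennreal (nu p)) *
      (ennreal (pmf (abpre Xv envp n z) m) * ennreal (pmf (abpre Xv envp 1 m) k)))"
    by (simp add: mean_cells_Suc Suc.IH nn_integral_child_kernel[OF envp] mult_ac)
  also have "ennreal (nu p ^ n) * ennreal (nu p) = ennreal (nu p ^ Suc n)"
    using nu by (simp add: ennreal_mult'[symmetric] mult.commute)
  finally show ?case
    by (simp only: ennreal_suminf_cmult ennreal_pmf_abpre_Suc)
qed

lemma card_cells_parasites_in:
  "of_nat (card {v \<in> cell_gen w n. parasites w z v \<in> A})
    = (\<integral>\<^sup>+v. of_bool (length v = n) * of_bool (is_cell w v \<and> parasites w z v \<in> A)
        \<partial>count_space UNIV)"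
proof -
  let ?S = "{v \<in> cell_gen w n. parasites w z v \<in> A}"
  have "finite ?S"
    using finite_cell_gen by simp
  then have "(\<integral>\<^sup>+v. of_bool (length v = n) * of_bool (is_cell w v \<and> parasites w z v \<in> A)
      \<partial>count_space UNIV) = (\<Sum>v\<in>?S. 1)"
    by (subst nn_integral_count_space') (auto simp: cell_gen_iff)
  then show ?thesis by simp
qed

lemma emeasure_pmf_nat_eq_suminf:
  "emeasure (measure_pmf M) A = (\<Sum>k::nat. ennreal (pmf M k) * indicator A k)"
proof -
  have "emeasure (measure_pmf M) A = (\<integral>\<^sup>+k. indicator A k \<partial>measure_pmf M)"
    by simp
  also have "\<dots> = (\<integral>\<^sup>+k. ennreal (pmf M k) * indicator A k \<partial>count_space UNIV)"
    by (rule nn_integral_measure_pmf)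
  finally show ?thesis
    by (simp only: nn_integral_count_space_nat)
qed

lemma nn_integral_card_cells_parasites_in:
  assumes envp: "\<And>j k. pmf envp (j, k) = (if 1 \<le> j \<and> j \<le> k then pmf p k / nu p else 0)"
  shows "(\<integral>\<^sup>+w. of_nat (card {v \<in> cell_gen w n. parasites w z v \<in> A}) \<partial>bwbp_space p Xv)
    = ennreal (nu p ^ n) * emeasure (abpre Xv envp n z) A"
proof -
  have "(\<integral>\<^sup>+w. of_nat (card {v \<in> cell_gen w n. parasites w z v \<in> A}) \<partial>bwbp_space p Xv)
      = (\<integral>\<^sup>+v. \<integral>\<^sup>+w. of_bool (length v = n) * of_bool (is_cell w v \<and> parasites w z v \<in> A)
          \<partial>bwbp_space p Xv \<partial>count_space UNIV)"
    unfolding card_cells_parasites_in by (rule nn_integral_count_space_nn_integral) measurable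
  also have "\<dots> = (\<integral>\<^sup>+v. (\<Sum>k. of_bool (length v = n) * cell_prob p Xv z v k * indicator A k)
      \<partial>count_space UNIV)"
  proof (rule nn_integral_cong)
    fix v
    have "(\<integral>\<^sup>+w. of_bool (is_cell w v) * indicator A (parasites w z v) \<partial>bwbp_space p Xv)
        = (\<Sum>k. cell_prob p Xv z v k * indicator A k)"
      unfolding cell_prob_def by (rule nn_integral_of_bool_times_fun_nat) measurable
    then show "(\<integral>\<^sup>+w. of_bool (length v = n) * of_bool (is_cell w v \<and> parasites w z v \<in> A)
        \<partial>bwbp_space p Xv) = (\<Sum>k. of_bool (length v = n) * cell_prob p Xv z v k * indicator A k)"
      by (simp add: nn_integral_cmult ennreal_suminf_cmult mult.assoc of_bool_conj indicator_def)
  qed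
  also have "\<dots> = (\<Sum>k. mean_cells p Xv z n k * indicator A k)"
    by (simp only: nn_integral_suminf[OF borel_measurable_count_space]
        nn_integral_multc[OF borel_measurable_count_space] mean_cells_def)
  also have "\<dots> = ennreal (nu p ^ n) * emeasure (abpre Xv envp n z) A"
    by (simp only: mean_cells_eq_abpre[OF envp] emeasure_pmf_nat_eq_suminf mult.assoc
        ennreal_suminf_cmult)
  finally show ?thesis .
qed

theorem proposition1:
  fixes p :: "nat pmf" and Xv :: "nat \<Rightarrow> (nat \<Rightarrow> nat) pmf"
    and envp :: "(nat \<times> nat) pmf" and n k z :: nat
  assumes finite_mean: "integrable (measure_pmf p) real"
    and gamma_pos: "0 < gamma_bwbp p Xv"
    and gamma_fin: "gamma_bwbp p Xv < \<infinity>"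
    and p1: "pmf p 1 < 1"
    and gen1: "pmf (gen1_total p Xv) 1 \<noteq> 1"
    and two: "\<exists>j k. 1 \<le> j \<and> j \<le> k \<and> pmf p k * measure_pmf.prob (Xv k) {x. 2 \<le> x j} > 0"
    and envp: "\<And>j k. pmf envp (j, k) = (if 1 \<le> j \<and> j \<le> k then pmf p k / nu p else 0)"
  shows "ennreal (measure_pmf.prob (abpre Xv envp n z) {k})
           = ennreal (1 / nu p ^ n) * (\<integral>\<^sup>+ \<omega>. of_nat (Tnk \<omega> z n k) \<partial>bwbp_space p Xv)
         \<and> ennreal (measure_pmf.prob (abpre Xv envp n z) {m. m > 0})
           = ennreal (1 / nu p ^ n) * (\<integral>\<^sup>+ \<omega>. of_nat (Tstar \<omega> z n) \<partial>bwbp_space p Xv)"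
proof -
  have nu: "nu p > 0" by (rule nu_pos[OF envp])
  have "ennreal (measure_pmf.prob (abpre Xv envp n z) A)
      = ennreal (1 / nu p ^ n) * (\<integral>\<^sup>+w. of_nat (card {v \<in> cell_gen w n. parasites w z v \<in> A})
          \<partial>bwbp_space p Xv)" for A
  proof -
    have "ennreal (1 / nu p ^ n) * ennreal (nu p ^ n) = 1"
      using nu by (simp add: ennreal_mult'[symmetric])
    then show ?thesis
      by (simp only: nn_integral_card_cells_parasites_in[OF envp]
          measure_pmf.emeasure_eq_measure mult.assoc[symmetric] mult_1)
  qed
  from this[of "{k}"] this[of "{m. m > 0}"] show ?thesis
    by (simp add: Tnk_def Tstar_def)
qed

end
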